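(* For $n\ge1$ one has $\tilde S_n=2H_n$, where $H_n=\sum_{k=0}^{n-1}R_{(1^k,n-k)}$. Moreover $\mathcal{P}=\bigoplus_n\mathcal{P}_n$ is the subalgebra of $\mathbf{Sym}$ generated by the elements $T_{2k+1}=R_{(2^k,1)}$, $k\ge0$ (here $(2^k,1)$ is the composition with $k$ parts equal to $2$ followed by one part $1$). For each $n$, the products $T^I=T_{i_1}T_{i_2}\cdots T_{i_r}$, where $I=(i_1,\dots,i_r)$ runs over the compositions of $n$ with all parts odd, form a basis of $\mathcal{P}_n$.
   Context: $\mathbf{Sym}$ is the free associative $\mathbb{Q}$-algebra on $S_1,S_2,\dots$ (with $S_0=1$, $\deg S_n=n$). For a composition $I=(i_1,\dots,i_r)$ of $n$, let $S^I=S_{i_1}\cdots S_{i_r}$ and $\operatorname{Des}(I)=\{i_1,\dots,i_1+\cdots+i_{r-1}\}$. Ribbons $R_J$ are defined by $S^I=\sum_{J\models n,\ \operatorname{Des}(J)\subseteq\operatorname{Des}(I)}R_J$, and $\Lambda_n=R_{(1^n)}$ with $\Lambda_0=1$; $(1^k,m)$ denotes $k$ parts $1$ followed by a part $m$. Set $\tilde S_n=\sum_{k=0}^n\Lambda_kS_{n-k}$, the image of $S_n$ under the $(1-q)$-transform at $q=-1$. The peak set of $J$ is $HP(J)=\{a\in\operatorname{Des}(J):a\ne1,\ a-1\notin\operatorname{Des}(J)\}$; $\mathcal{P}_n$ is the linear span of the elements $\Pi_P=\sum_{J\models n,\ HP(J)=P}R_J$. *)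

theory Defs
  imports Complex_Main "HOL-Library.Function_Algebras"
begin

text \<open>Model of Sym: the free associative Q-algebra on S_1, S_2, ... has the words
  S^I (I a composition, i.e. a list of positive naturals) as a linear basis, with
  S^I S^J = S^(I@J).  An element is represented by its coefficient function in
  this basis (finitely supported for all elements considered here).\<close>

type_synonym nsym = "nat list \<Rightarrow> rat"

definition sw :: "nat list \<Rightarrow> nsym" where
  "sw I = (\<lambda>w. if w = I then 1 else 0)"

definition one_s :: nsym where
  "one_s = sw []"

definition mul :: "nsym \<Rightarrow> nsym \<Rightarrow> nsym" where
  "mul f g = (\<lambda>w. \<Sum>i\<le>length w. f (take i w) * g (drop i w))"

definition smul :: "rat \<Rightarrow> nsym \<Rightarrow> nsym" where
  "smul c f = (\<lambda>w. c * f w)"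

definition Sn :: "nat \<Rightarrow> nsym" where
  "Sn m = sw (if m = 0 then [] else [m])"

definition comps :: "nat \<Rightarrow> nat list set" where
  "comps n = {I. 0 \<notin> set I \<and> sum_list I = n}"

definition Des :: "nat list \<Rightarrow> nat set" where
  "Des I = {sum_list (take j I) | j. 1 \<le> j \<and> j < length I}"

text \<open>Ribbon R_J: Moebius inversion of S^I = sum over Des J \<subseteq> Des I of R_J.\<close>
definition ribbon :: "nat list \<Rightarrow> nsym" where
  "ribbon J = (\<Sum>I\<in>{I\<in>comps (sum_list J). Des I \<subseteq> Des J}.
                 smul ((-1) ^ (length J - length I)) (sw I))"

definition Lam :: "nat \<Rightarrow> nsym" where
  "Lam k = ribbon (replicate k 1)"

definition Stilde :: "nat \<Rightarrow> nsym" where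
  "Stilde n = (\<Sum>k\<le>n. mul (Lam k) (Sn (n - k)))"

definition H :: "nat \<Rightarrow> nsym" where
  "H n = (\<Sum>k<n. ribbon (replicate k 1 @ [n - k]))"

definition HP :: "nat list \<Rightarrow> nat set" where
  "HP J = {a \<in> Des J. a \<noteq> 1 \<and> a - 1 \<notin> Des J}"

definition PiP :: "nat \<Rightarrow> nat set \<Rightarrow> nsym" where
  "PiP n P = (\<Sum>J\<in>{J\<in>comps n. HP J = P}. ribbon J)"

definition lspan :: "nsym set \<Rightarrow> nsym set" where
  "lspan A = {f. \<exists>B c. finite B \<and> B \<subseteq> A \<and> f = (\<Sum>b\<in>B. smul (c b) b)}"

definition Pn :: "nat \<Rightarrow> nsym set" where
  "Pn n = lspan {PiP n P | P. True}"

text \<open>The (internal) direct sum of all P_n.\<close>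
definition calP :: "nsym set" where
  "calP = lspan (\<Union>n. Pn n)"

inductive_set gen_alg :: "nsym set \<Rightarrow> nsym set" for G :: "nsym set" where
  gen_one: "one_s \<in> gen_alg G"
| gen_base: "g \<in> G \<Longrightarrow> g \<in> gen_alg G"
| gen_add: "f \<in> gen_alg G \<Longrightarrow> g \<in> gen_alg G \<Longrightarrow> f + g \<in> gen_alg G"
| gen_smul: "f \<in> gen_alg G \<Longrightarrow> smul c f \<in> gen_alg G"
| gen_mul: "f \<in> gen_alg G \<Longrightarrow> g \<in> gen_alg G \<Longrightarrow> mul f g \<in> gen_alg G"

text \<open>T_i = R_(2^k,1) for i = 2k+1 (used only for odd i).\<close>
definition Todd :: "nat \<Rightarrow> nsym" where
  "Todd i = ribbon (replicate (i div 2) 2 @ [1])"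

definition Tprod :: "nat list \<Rightarrow> nsym" where
  "Tprod I = foldr (\<lambda>i acc. mul (Todd i) acc) I one_s"

definition oddcomps :: "nat \<Rightarrow> nat list set" where
  "oddcomps n = {I \<in> comps n. \<forall>i\<in>set I. odd i}"

end

theory Submission
  imports Defs
begin

text \<open>
  A homogeneous element \<open>f\<close> of degree \<open>n\<close> is described by its ribbon coordinates: its
  coefficient on \<open>R\<^sub>J\<close> depends only on \<open>D = Des J\<close> and is the sum of the coefficients
  \<open>f(I)\<close> of \<open>S\<^sup>I\<close> over the compositions \<open>I\<close> with \<open>D \<subseteq> Des I\<close>. Products are simple in
  these coordinates: the coordinate of \<open>f g\<close> at \<open>D\<close> is the coordinate of \<open>f\<close> at the part of
  \<open>D\<close> below the degree \<open>m\<close> of \<open>f\<close> times the coordinate of \<open>g\<close> at the part above \<open>m\<close>,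
  shifted down by \<open>m\<close>; whether \<open>m \<in> D\<close> does not matter.

  For \<open>S~\<^sub>n = \<Sum>\<^sub>k \<Lambda>\<^sub>k S\<^bsub>n-k\<^esub>\<close> the coordinate at \<open>D\<close> is therefore the number of \<open>k\<close>
  with \<open>{1..<k} \<subseteq> D \<subseteq> {..k}\<close>: two if \<open>D = {1..j}\<close> with \<open>j < n\<close>, and zero otherwise,
  which is the coordinate of \<open>2 H\<^sub>n\<close>.

  \<open>P\<^sub>n\<close> consists of the elements of degree \<open>n\<close> whose coordinates depend only on the peak
  set of \<open>D\<close>, so the product rule gives \<open>P\<^sub>m P\<^sub>k \<subseteq> P\<^bsub>m+k\<^esub>\<close>. The coordinate of
  \<open>T\<^sup>I\<close> at \<open>D\<close> is 1 if the block of \<open>D\<close> belonging to each part \<open>i\<close> of \<open>I\<close> is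
  \<open>{2, 4, \<dots>, i - 1}\<close> (relative to the start of the block), and 0 otherwise. All such \<open>D\<close>
  have peak sets containing the union \<open>block_peaks I\<close> of these blocks, with equality for
  \<open>D = block_peaks I\<close>, and \<open>block_peaks\<close> maps the odd compositions of \<open>n\<close> bijectively onto
  the peak sets. Hence the \<open>T\<^sup>I\<close> are unitriangular with respect to the \<open>\<Pi>\<^sub>P\<close>, ordered by
  inclusion of peak sets, and form a basis of \<open>P\<^sub>n\<close>; generation of the peak algebra by the
  \<open>T\<^bsub>2k+1\<^esub>\<close> follows.
\<close>

section \<open>Compositions and descent sets\<close>

lemma comps_Nil [simp]: "[] \<in> comps n \<longleftrightarrow> n = 0"
  by (auto simp: comps_def)

lemma comps_Cons [simp]: "a # I \<in> comps n \<longleftrightarrow> 0 < a \<and> a \<le> n \<and> I \<in> comps (n - a)"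
  by (auto simp: comps_def)

lemma sum_list_comps: "I \<in> comps n \<Longrightarrow> sum_list I = n"
  by (simp add: comps_def)

lemma comps_0: "comps 0 = {[]}"
proof -
  have "I = []" if "I \<in> comps 0" for I
    using that by (cases I) (auto simp: comps_def)
  then show ?thesis
    by auto
qed

lemma append_in_comps: "a \<in> comps m \<Longrightarrow> b \<in> comps k \<Longrightarrow> a @ b \<in> comps (m + k)"
  by (auto simp: comps_def)

lemma finite_comps: "finite (comps n)"
proof -
  have "length I \<le> sum_list I" if "0 \<notin> set I" for I :: "nat list"
    using that by (induction I) (auto simp: Suc_le_eq)
  then have "comps n \<subseteq> {I. set I \<subseteq> {..n} \<and> length I \<le> n}"
    using member_le_sum_list by (fastforce simp: comps_def)
  then show ?thesis
    by (rule finite_subset) (rule finite_lists_length_le, simp)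
qed

lemma Des_Nil [simp]: "Des [] = {}"
  by (auto simp: Des_def)

lemma Des_Cons: "Des (a # I) = (if I = [] then {} else insert a ((+) a ` Des I))"
proof (cases "I = []")
  case False
  have "Des (a # I) = {a + sum_list (take j I) | j. j < length I}"
    unfolding Des_def
  proof (auto, goal_cases)
    case (1 j)
    then show ?case
      by (intro exI[of _ "j - 1"]) (cases j, auto)
  next
    case (2 j)
    then show ?case
      by (intro exI[of _ "Suc j"]) auto
  qed
  also have "\<dots> = insert a ((+) a ` Des I)"
    unfolding Des_def using False
  proof (auto, goal_cases)
    case (1 j)
    then show ?case
      by (cases j) auto
  next
    case 2
    then show ?case
      by (intro exI[of _ 0]) auto
  qed
  finally show ?thesis
    using False by simp
qed (auto simp: Des_def)

lemma Des_singleton [simp]: "Des [a] = {}"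
  by (simp add: Des_Cons)

lemma finite_Des: "finite (Des I)"
  unfolding Des_def by (rule finite_subset[of _ "(\<lambda>j. sum_list (take j I)) ` {..<length I}"]) auto

lemma Des_subset: "I \<in> comps n \<Longrightarrow> Des I \<subseteq> {1..<n}"
proof (induction I arbitrary: n)
  case (Cons a I)
  then have IH: "Des I \<subseteq> {1..<n - a}" and a: "0 < a" "a \<le> n"
    by auto
  show ?case
  proof (cases "I = []")
    case False
    then have "sum_list I > 0"
      using Cons.prems by (cases I) (auto simp: comps_def)
    then have "a < n"
      using Cons.prems by (auto simp: comps_def)
    moreover have "a + x < n" if "x \<in> Des I" for x
      using IH that by force
    ultimately show ?thesis
      using IH a False by (auto simp: Des_Cons)
  qed (simp add: Des_Cons)
qed simp

lemma length_eq_card_Des: "I \<in> comps n \<Longrightarrow> length I = (if n = 0 then 0 else Suc (card (Des I)))"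
proof (induction I arbitrary: n)
  case (Cons a I)
  then have a: "0 < a" "a \<le> n" and I: "I \<in> comps (n - a)"
    by auto
  then have IH: "length I = (if n - a = 0 then 0 else Suc (card (Des I)))"
    using Cons.IH by blast
  show ?case
  proof (cases "I = []")
    case False
    then have "n - a \<noteq> 0"
      using I by (cases I) (auto simp: comps_def)
    moreover have "a \<notin> (+) a ` Des I"
      using Des_subset[OF I] by auto
    ultimately show ?thesis
      using IH a False by (simp add: Des_Cons card_image finite_Des)
  qed (use a I in \<open>simp add: comps_0\<close>)
qed simp

lemma Des_eqD: "I \<in> comps n \<Longrightarrow> I' \<in> comps n \<Longrightarrow> Des I = Des I' \<Longrightarrow> I = I'"
proof (induction I arbitrary: I' n)
  case Nil
  then show ?case
    using comps_0 by auto
next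
  case (Cons a I)
  from Cons.prems obtain a' I1 where I': "I' = a' # I1"
    by (cases I') auto
  have a: "0 < a" "a \<le> n" "I \<in> comps (n - a)"
    using Cons.prems by auto
  have a': "0 < a'" "a' \<le> n" "I1 \<in> comps (n - a')"
    using Cons.prems I' by auto
  show ?case
  proof (cases "I = []")
    case True
    then have "Des I' = {}"
      using Cons.prems by (simp add: Des_Cons)
    then have "I1 = []"
      using I' by (simp add: Des_Cons split: if_splits)
    then show ?thesis
      using True a a' I' by simp
  next
    case False
    then have "I1 \<noteq> []"
      using Cons.prems I' by (auto simp: Des_Cons split: if_splits)
    have E: "insert a ((+) a ` Des I) = insert a' ((+) a' ` Des I1)"
      using Cons.prems I' False \<open>I1 \<noteq> []\<close> by (simp add: Des_Cons)
    then have "a \<in> insert a' ((+) a' ` Des I1)" "a' \<in> insert a ((+) a ` Des I)"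
      by blast+
    then have a_eq: "a = a'"
      by auto
    have "a \<notin> (+) a ` Des I" "a \<notin> (+) a ` Des I1"
      using Des_subset[OF a(3)] Des_subset[OF a'(3)] by auto
    then have "(+) a ` Des I = (+) a ` Des I1"
      using E a_eq by (metis insert_ident)
    then have "Des I = Des I1"
      by (simp add: inj_image_eq_iff)
    then have "I = I1"
      using Cons.IH[of "n - a" I1] a a' a_eq by simp
    then show ?thesis
      using I' a_eq by simp
  qed
qed

lemma inj_on_Des: "inj_on Des (comps n)"
  by (auto intro: inj_onI Des_eqD)

lemma Des_surj: "D \<subseteq> {1..<n} \<Longrightarrow> \<exists>I\<in>comps n. Des I = D"
proof (induction n arbitrary: D rule: less_induct)
  case (less n)
  show ?case
  proof (cases "D = {}")
    case True
    show ?thesis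
    proof (cases "n = 0")
      case True
      then show ?thesis
        using \<open>D = {}\<close> by (intro bexI[of _ "[]"]) auto
    next
      case False
      then show ?thesis
        using \<open>D = {}\<close> by (intro bexI[of _ "[n]"]) (auto simp: comps_def)
    qed
  next
    case False
    have fin: "finite D"
      using less.prems finite_subset by blast
    define a where "a = Min D"
    have aD: "a \<in> D" and amin: "\<And>d. d \<in> D \<Longrightarrow> a \<le> d"
      using False fin a_def by simp_all
    have a: "0 < a" "a < n"
      using aD less.prems by auto
    define D' where "D' = (\<lambda>d. d - a) ` (D - {a})"
    have D'sub: "D' \<subseteq> {1..<n - a}"
      unfolding D'_def using less.prems amin by (force simp: le_less)
    obtain I where I: "I \<in> comps (n - a)" "Des I = D'"
      using less.IH[OF _ D'sub] a by auto
    have "I \<noteq> []"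
      using I a by auto
    have "(+) a ` D' = D - {a}"
      unfolding D'_def using amin by (force simp: image_image intro: image_eqI[where x = "_ - a"])
    then have "Des (a # I) = D"
      using \<open>I \<noteq> []\<close> I aD by (auto simp: Des_Cons)
    moreover have "a # I \<in> comps n"
      using I a by simp
    ultimately show ?thesis
      by blast
  qed
qed

lemma Des_image_comps: "Des ` comps n = Pow {1..<n}"
proof (intro equalityI subsetI)
  fix S
  assume "S \<in> Pow {1..<n}"
  then obtain I where "I \<in> comps n" "Des I = S"
    using Des_surj by blast
  then show "S \<in> Des ` comps n"
    by blast
qed (use Des_subset in blast)

lemma sum_comps_Des:
  "(\<Sum>I | I \<in> comps n \<and> P (Des I). g (Des I)) = (\<Sum>S | S \<subseteq> {1..<n} \<and> P S. g S)"
proof (rule sum.reindex_bij_betw)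
  have "Des ` {I. I \<in> comps n \<and> P (Des I)} = {S \<in> Des ` comps n. P S}"
    by blast
  also have "\<dots> = {S. S \<subseteq> {1..<n} \<and> P S}"
    by (simp add: Des_image_comps)
  moreover have "inj_on Des {I. I \<in> comps n \<and> P (Des I)}"
    by (rule inj_on_subset[OF inj_on_Des]) blast
  ultimately show "bij_betw Des {I. I \<in> comps n \<and> P (Des I)} {S. S \<subseteq> {1..<n} \<and> P S}"
    by (simp add: bij_betw_def)
qed

definition lower_part :: "nat \<Rightarrow> nat set \<Rightarrow> nat set" where
  "lower_part m D = D \<inter> {..<m}"

definition upper_part :: "nat \<Rightarrow> nat set \<Rightarrow> nat set" where
  "upper_part m D = {e. 0 < e \<and> m + e \<in> D}"

lemma Des_append: "a \<in> comps m \<Longrightarrow>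
  Des (a @ b) = Des a \<union> (if a \<noteq> [] \<and> b \<noteq> [] then {m} else {}) \<union> (+) m ` Des b"
proof (induction a arbitrary: m)
  case (Cons x a1)
  then have x: "0 < x" "x \<le> m" and a1: "a1 \<in> comps (m - x)"
    by auto
  show ?case
  proof (cases "a1 = []")
    case True
    then have "m = x"
      using a1 x by simp
    then show ?thesis
      using True by (auto simp: Des_Cons)
  next
    case False
    have "(+) x ` (+) (m - x) ` Des b = (+) m ` Des b"
      using x by (auto simp: image_image)
    then show ?thesis
      using False Cons.IH[OF a1] x by (auto simp: Des_Cons image_Un)
  qed
qed simp

lemma subset_Des_append_iff:
  assumes a: "a \<in> comps m" and b: "b \<in> comps k" and D: "D \<subseteq> {1..<m + k}"
  shows "D \<subseteq> Des (a @ b) \<longleftrightarrow> lower_part m D \<subseteq> Des a \<and> upper_part m D \<subseteq> Des b"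
proof -
  have Da: "Des a \<subseteq> {1..<m}"
    using Des_subset a by auto
  have lower: "d \<in> Des (a @ b) \<longleftrightarrow> d \<in> Des a" if "d < m" for d
    using that Da unfolding Des_append[OF a] by auto
  have upper: "m + e \<in> Des (a @ b) \<longleftrightarrow> e \<in> Des b" if "0 < e" for e
    using that Da unfolding Des_append[OF a] by auto
  have middle: "m \<in> Des (a @ b)" if "m \<in> D"
    using that a b D unfolding Des_append[OF a] by auto
  show ?thesis
  proof
    assume "D \<subseteq> Des (a @ b)"
    then show "lower_part m D \<subseteq> Des a \<and> upper_part m D \<subseteq> Des b"
      using lower upper by (auto simp: lower_part_def upper_part_def)
  next
    assume parts: "lower_part m D \<subseteq> Des a \<and> upper_part m D \<subseteq> Des b"
    show "D \<subseteq> Des (a @ b)"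
    proof
      fix d
      assume "d \<in> D"
      consider "d < m" | "d = m" | "m < d"
        by linarith
      then show "d \<in> Des (a @ b)"
      proof cases
        case 3
        then obtain e where "d = m + e" "0 < e"
          using less_imp_add_positive by blast
        then show ?thesis
          using parts upper \<open>d \<in> D\<close> by (auto simp: upper_part_def)
      qed (use parts lower middle \<open>d \<in> D\<close> in \<open>auto simp: lower_part_def\<close>)
    qed
  qed
qed

lemma sum_sign_between:
  assumes "finite C"
  shows "(\<Sum>S | S \<subseteq> C \<and> B \<subseteq> S. (-1::'a::ring_1) ^ card S) = (if B = C then (-1) ^ card C else 0)"
proof (cases "B \<subset> C")
  case True
  have "finite {S. S \<subseteq> C \<and> B \<subseteq> S}"
    using assms by simp
  then show ?thesis
    using True card_subsupersets_even_odd[OF assms True]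
    by (auto intro!: sum_alternating_cancels simp: conj_ac)
next
  case False
  then have "{S. S \<subseteq> C \<and> B \<subseteq> S} = (if B = C then {C} else {})"
    by auto
  then show ?thesis
    by simp
qed

lemma sign_diff_card:
  "finite C \<Longrightarrow> B \<subseteq> C \<Longrightarrow> (-1::'a::ring_1) ^ (card C - card B) = (-1) ^ card C * (-1) ^ card B"
  by (metis card_mono neg_one_power_add_eq_neg_one_power_diff power_add)


section \<open>The algebra \<open>Sym\<close>\<close>

lemma sum_fun_apply: "(\<Sum>x\<in>X. F x) w = (\<Sum>x\<in>X. F x w)"
  by (induction X rule: infinite_finite_induct) auto

lemma sw_apply: "sw I w = (if w = I then 1 else 0)"
  by (simp add: sw_def)

lemma smul_apply: "smul c f w = c * f w"
  by (simp add: smul_def)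

lemma smul_add_left: "smul (a + b) f = smul a f + smul b f"
  by (simp add: fun_eq_iff smul_apply algebra_simps)

lemma smul_smul: "smul a (smul b f) = smul (a * b) f"
  by (simp add: fun_eq_iff smul_apply)

lemma smul_one [simp]: "smul 1 f = f"
  by (simp add: fun_eq_iff smul_apply)

lemma smul_zero_left [simp]: "smul 0 f = 0"
  by (simp add: fun_eq_iff smul_apply)

lemma diff_eq_add_smul: "f - g = f + smul (-1) g"
  by (simp add: fun_eq_iff smul_apply)

lemma smul_sum: "smul c (\<Sum>x\<in>X. F x) = (\<Sum>x\<in>X. smul c (F x))"
  by (simp add: fun_eq_iff smul_apply sum_fun_apply sum_distrib_left)

lemma sum_smul: "smul (\<Sum>x\<in>X. c x) f = (\<Sum>x\<in>X. smul (c x) f)"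
  by (simp add: fun_eq_iff smul_apply sum_fun_apply sum_distrib_right)

lemma mul_sum_left: "mul (\<Sum>x\<in>X. F x) g = (\<Sum>x\<in>X. mul (F x) g)"
  by (simp add: fun_eq_iff mul_def sum_fun_apply sum_distrib_right sum.swap[of _ X])

lemma mul_sum_right: "mul f (\<Sum>x\<in>X. G x) = (\<Sum>x\<in>X. mul f (G x))"
  by (simp add: fun_eq_iff mul_def sum_fun_apply sum_distrib_left sum.swap[of _ X])

lemma mul_smul_left: "mul (smul c f) g = smul c (mul f g)"
  by (simp add: fun_eq_iff smul_apply mul_def sum_distrib_left mult.assoc)

lemma mul_smul_right: "mul f (smul c g) = smul c (mul f g)"
  by (simp add: fun_eq_iff smul_apply mul_def sum_distrib_left algebra_simps)

lemma lspan_minimal: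
  assumes "A \<subseteq> S" "0 \<in> S" "\<And>f g. f \<in> S \<Longrightarrow> g \<in> S \<Longrightarrow> f + g \<in> S"
    and "\<And>c f. f \<in> S \<Longrightarrow> smul c f \<in> S"
  shows "lspan A \<subseteq> S"
proof
  fix f
  assume "f \<in> lspan A"
  then obtain B c where B: "finite B" "B \<subseteq> A" and f: "f = (\<Sum>b\<in>B. smul (c b) b)"
    unfolding lspan_def by blast
  from B have "(\<Sum>b\<in>B. smul (c b) b) \<in> S"
    by (induction B rule: finite_induct) (use assms in auto)
  then show "f \<in> S"
    using f by simp
qed

lemma lspan_zero: "0 \<in> lspan A"
  unfolding lspan_def by (intro CollectI exI[of _ "{}"]) auto

lemma lspan_superset: "a \<in> A \<Longrightarrow> a \<in> lspan A"
  unfolding lspan_def by (intro CollectI exI[of _ "{a}"] exI[of _ "\<lambda>_. 1"]) auto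

lemma lspan_smul: "f \<in> lspan A \<Longrightarrow> smul a f \<in> lspan A"
  unfolding lspan_def
  by (auto simp: smul_sum smul_smul intro!: exI[of _ "\<lambda>b. a * _ b"])

lemma lspan_add:
  assumes "f \<in> lspan A" "g \<in> lspan A"
  shows "f + g \<in> lspan A"
proof -
  obtain B c B' c' where B: "finite B" "B \<subseteq> A" "f = (\<Sum>b\<in>B. smul (c b) b)"
    and B': "finite B'" "B' \<subseteq> A" "g = (\<Sum>b\<in>B'. smul (c' b) b)"
    using assms unfolding lspan_def by blast
  define d where "d b = (if b \<in> B then c b else 0) + (if b \<in> B' then c' b else 0)" for b
  have "f = (\<Sum>b\<in>B \<union> B'. smul (if b \<in> B then c b else 0) b)"
    unfolding B(3) using B B' by (intro sum.mono_neutral_cong_left) auto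
  moreover have "g = (\<Sum>b\<in>B \<union> B'. smul (if b \<in> B' then c' b else 0) b)"
    unfolding B'(3) using B B' by (intro sum.mono_neutral_cong_left) auto
  ultimately have "f + g = (\<Sum>b\<in>B \<union> B'. smul (d b) b)"
    unfolding d_def by (simp add: smul_add_left sum.distrib)
  then show ?thesis
    using B B' unfolding lspan_def by (intro CollectI exI[of _ "B \<union> B'"] exI[of _ d]) simp
qed

lemma lspan_sum: "(\<And>x. x \<in> X \<Longrightarrow> F x \<in> lspan A) \<Longrightarrow> (\<Sum>x\<in>X. F x) \<in> lspan A"
  by (induction X rule: infinite_finite_induct) (auto intro: lspan_zero lspan_add)

lemma lspan_diff: "f \<in> lspan A \<Longrightarrow> g \<in> lspan A \<Longrightarrow> f - g \<in> lspan A"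
  by (simp add: diff_eq_add_smul lspan_add lspan_smul)

lemma lspan_mul_closed:
  assumes "\<And>a b. a \<in> A \<Longrightarrow> b \<in> A \<Longrightarrow> mul a b \<in> lspan A"
    and "f \<in> lspan A" "g \<in> lspan A"
  shows "mul f g \<in> lspan A"
proof -
  obtain B c B' c' where B: "B \<subseteq> A" "f = (\<Sum>b\<in>B. smul (c b) b)"
    and B': "B' \<subseteq> A" "g = (\<Sum>b\<in>B'. smul (c' b) b)"
    using assms(2,3) unfolding lspan_def by blast
  have "mul f g = (\<Sum>b\<in>B. smul (c b) (mul b g))"
    unfolding B(2) mul_sum_left mul_smul_left ..
  also have "\<dots> = (\<Sum>b\<in>B. smul (c b) (\<Sum>b'\<in>B'. smul (c' b') (mul b b')))"
    unfolding B'(2) mul_sum_right mul_smul_right ..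
  also have "\<dots> \<in> lspan A"
    using assms(1) B(1) B'(1) by (blast intro: lspan_sum lspan_smul)
  finally show ?thesis .
qed


section \<open>Ribbon coordinates\<close>

definition homogeneous :: "nat \<Rightarrow> nsym \<Rightarrow> bool" where
  "homogeneous n f \<longleftrightarrow> (\<forall>w. w \<notin> comps n \<longrightarrow> f w = 0)"

text \<open>By \<open>S\<^sup>I = \<Sum>\<^bsub>Des J \<subseteq> Des I\<^esub> R\<^sub>J\<close>, this is the coefficient of \<open>R\<^sub>J\<close> with \<open>Des J = D\<close>
  in a homogeneous \<open>f\<close> of degree \<open>n\<close>.\<close>

definition ribbon_coeff :: "nsym \<Rightarrow> nat \<Rightarrow> nat set \<Rightarrow> rat" where
  "ribbon_coeff f n D = (\<Sum>I | I \<in> comps n \<and> D \<subseteq> Des I. f I)"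

lemma homogeneous_zero: "homogeneous n 0"
  by (simp add: homogeneous_def)

lemma homogeneous_add: "homogeneous n f \<Longrightarrow> homogeneous n g \<Longrightarrow> homogeneous n (f + g)"
  by (simp add: homogeneous_def)

lemma homogeneous_smul: "homogeneous n f \<Longrightarrow> homogeneous n (smul c f)"
  by (simp add: homogeneous_def smul_apply)

lemma homogeneous_sum: "(\<And>x. x \<in> X \<Longrightarrow> homogeneous n (F x)) \<Longrightarrow> homogeneous n (\<Sum>x\<in>X. F x)"
  by (simp add: homogeneous_def sum_fun_apply)

lemma homogeneous_sw: "I \<in> comps n \<Longrightarrow> homogeneous n (sw I)"
  by (auto simp: homogeneous_def sw_apply)

lemma ribbon_apply:
  "ribbon J w = (if w \<in> comps (sum_list J) \<and> Des w \<subseteq> Des J then (-1) ^ (length J - length w) else 0)"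
proof -
  have "ribbon J w = (\<Sum>I | I \<in> comps (sum_list J) \<and> Des I \<subseteq> Des J.
          if w = I then (-1) ^ (length J - length I) else 0)"
    unfolding ribbon_def sum_fun_apply smul_apply sw_apply by (intro sum.cong) auto
  also have "\<dots> = (if w \<in> comps (sum_list J) \<and> Des w \<subseteq> Des J then (-1) ^ (length J - length w) else 0)"
    using finite_comps by (simp add: sum.delta)
  finally show ?thesis .
qed

lemma homogeneous_ribbon: "J \<in> comps n \<Longrightarrow> homogeneous n (ribbon J)"
  by (simp add: homogeneous_def ribbon_apply sum_list_comps)

lemma ribbon_coeff_zero: "ribbon_coeff 0 n D = 0"
  by (simp add: ribbon_coeff_def)

lemma ribbon_coeff_add: "ribbon_coeff (f + g) n D = ribbon_coeff f n D + ribbon_coeff g n D"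
  by (simp add: ribbon_coeff_def sum.distrib)

lemma ribbon_coeff_smul: "ribbon_coeff (smul c f) n D = c * ribbon_coeff f n D"
  by (simp add: ribbon_coeff_def smul_apply sum_distrib_left)

lemma ribbon_coeff_diff: "ribbon_coeff (f - g) n D = ribbon_coeff f n D - ribbon_coeff g n D"
  by (simp add: ribbon_coeff_def sum_subtractf)

lemma ribbon_coeff_sum: "ribbon_coeff (\<Sum>x\<in>X. F x) n D = (\<Sum>x\<in>X. ribbon_coeff (F x) n D)"
  unfolding ribbon_coeff_def sum_fun_apply by (rule sum.swap)

lemma ribbon_coeff_sw: "ribbon_coeff (sw I) n D = (if I \<in> comps n \<and> D \<subseteq> Des I then 1 else 0)"
  using finite_comps by (simp add: ribbon_coeff_def sw_apply sum.delta)

lemma length_diff_eq_card_Des_diff: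
  "I \<in> comps n \<Longrightarrow> K \<in> comps n \<Longrightarrow> length K - length I = card (Des K) - card (Des I)"
  using length_eq_card_Des[of I n] length_eq_card_Des[of K n] by auto

lemma ribbon_coeff_ribbon:
  assumes K: "K \<in> comps n" and D: "D \<subseteq> {1..<n}"
  shows "ribbon_coeff (ribbon K) n D = (if D = Des K then 1 else 0)"
proof -
  let ?sign = "\<lambda>S. (-1::rat) ^ (card (Des K) - card S)"
  have "ribbon_coeff (ribbon K) n D = (\<Sum>I | I \<in> comps n \<and> D \<subseteq> Des I \<and> Des I \<subseteq> Des K. ?sign (Des I))"
    unfolding ribbon_coeff_def using K finite_comps
    by (intro sum.mono_neutral_cong_right)
      (auto simp: ribbon_apply sum_list_comps length_diff_eq_card_Des_diff)
  also have "\<dots> = (\<Sum>S | S \<subseteq> {1..<n} \<and> D \<subseteq> S \<and> S \<subseteq> Des K. ?sign S)"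
    by (rule sum_comps_Des)
  also have "\<dots> = (\<Sum>S | S \<subseteq> Des K \<and> D \<subseteq> S. (-1) ^ card (Des K) * (-1) ^ card S)"
    using Des_subset[OF K] finite_Des
    by (intro sum.cong) (auto simp: sign_diff_card[of "Des K"] dest: finite_subset)
  also have "\<dots> = (if D = Des K then 1 else 0)"
    by (subst sum_distrib_left[symmetric]) (simp add: sum_sign_between finite_Des)
  finally show ?thesis .
qed

lemma sw_eq_sum_ribbon:
  assumes I: "I \<in> comps n"
  shows "sw I = (\<Sum>J | J \<in> comps n \<and> Des J \<subseteq> Des I. ribbon J)"
proof
  fix w
  show "sw I w = (\<Sum>J | J \<in> comps n \<and> Des J \<subseteq> Des I. ribbon J) w"
  proof (cases "w \<in> comps n")
    case False
    then show ?thesis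
      using I by (auto simp: sw_apply sum_fun_apply ribbon_apply sum_list_comps intro!: sum.neutral)
  next
    case w: True
    let ?sign = "\<lambda>S. (-1::rat) ^ (card S - card (Des w))"
    have "(\<Sum>J | J \<in> comps n \<and> Des J \<subseteq> Des I. ribbon J) w
        = (\<Sum>J | J \<in> comps n \<and> Des w \<subseteq> Des J \<and> Des J \<subseteq> Des I. ?sign (Des J))"
      unfolding sum_fun_apply using w finite_comps
      by (intro sum.mono_neutral_cong_right)
        (auto simp: ribbon_apply sum_list_comps length_diff_eq_card_Des_diff)
    also have "\<dots> = (\<Sum>S | S \<subseteq> {1..<n} \<and> Des w \<subseteq> S \<and> S \<subseteq> Des I. ?sign S)"
      by (rule sum_comps_Des)
    also have "\<dots> = (\<Sum>S | S \<subseteq> Des I \<and> Des w \<subseteq> S. (-1) ^ card S * (-1) ^ card (Des w))"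
      using Des_subset[OF I] finite_Des
      by (intro sum.cong) (auto simp: sign_diff_card dest: finite_subset)
    also have "\<dots> = (if w = I then 1 else 0)"
      using Des_eqD[OF w I]
      by (subst sum_distrib_right[symmetric]) (auto simp: sum_sign_between finite_Des)
    finally show ?thesis
      by (simp add: sw_apply)
  qed
qed

lemma homogeneous_sum_sw: "homogeneous n f \<Longrightarrow> f = (\<Sum>I\<in>comps n. smul (f I) (sw I))"
  by (auto simp: fun_eq_iff homogeneous_def sum_fun_apply smul_apply sw_apply finite_comps
      if_distrib cong: if_cong)

lemma homogeneous_ribbon_expansion:
  assumes "homogeneous n f"
  shows "f = (\<Sum>J\<in>comps n. smul (ribbon_coeff f n (Des J)) (ribbon J))"
proof -
  have "f = (\<Sum>I\<in>comps n. smul (f I) (sw I))"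
    using assms by (rule homogeneous_sum_sw)
  also have "\<dots> = (\<Sum>I\<in>comps n. \<Sum>J | J \<in> comps n \<and> Des J \<subseteq> Des I. smul (f I) (ribbon J))"
    by (intro sum.cong refl) (simp add: sw_eq_sum_ribbon smul_sum)
  also have "\<dots> = (\<Sum>J\<in>comps n. \<Sum>I | I \<in> comps n \<and> Des J \<subseteq> Des I. smul (f I) (ribbon J))"
    by (rule sum.swap_restrict[OF finite_comps finite_comps])
  also have "\<dots> = (\<Sum>J\<in>comps n. smul (ribbon_coeff f n (Des J)) (ribbon J))"
    by (simp add: ribbon_coeff_def sum_smul)
  finally show ?thesis .
qed

lemma homogeneous_eqI:
  assumes "homogeneous n f" "homogeneous n g"
    and "\<And>D. D \<subseteq> {1..<n} \<Longrightarrow> ribbon_coeff f n D = ribbon_coeff g n D"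
  shows "f = g"
proof -
  have "f = (\<Sum>J\<in>comps n. smul (ribbon_coeff f n (Des J)) (ribbon J))"
    using assms(1) by (rule homogeneous_ribbon_expansion)
  also have "\<dots> = (\<Sum>J\<in>comps n. smul (ribbon_coeff g n (Des J)) (ribbon J))"
    using assms(3) Des_subset by (intro sum.cong refl) simp
  also have "\<dots> = g"
    using assms(2) by (rule homogeneous_ribbon_expansion[symmetric])
  finally show ?thesis .
qed

lemma bij_betw_splits: "bij_betw (\<lambda>i. (take i w, drop i w)) {..length w} {p. fst p @ snd p = w}"
  by (rule bij_betw_byWitness[where f' = "\<lambda>p. length (fst p)"]) auto

lemma mul_apply_splits: "mul f g w = (\<Sum>p | fst p @ snd p = w. f (fst p) * g (snd p))"
  unfolding mul_def using sum.reindex_bij_betw[OF bij_betw_splits, of "\<lambda>p. f (fst p) * g (snd p)" w]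
  by simp

lemma mul_homogeneous_apply:
  assumes "homogeneous m f" "homogeneous k g"
  shows "mul f g w = (\<Sum>p | p \<in> comps m \<times> comps k \<and> fst p @ snd p = w. f (fst p) * g (snd p))"
proof -
  have "finite {p. fst p @ snd p = w}"
    using bij_betw_finite[OF bij_betw_splits] by blast
  then show ?thesis
    unfolding mul_apply_splits using assms
    by (intro sum.mono_neutral_right) (auto simp: homogeneous_def)
qed

lemma homogeneous_mul: "homogeneous m f \<Longrightarrow> homogeneous k g \<Longrightarrow> homogeneous (m + k) (mul f g)"
  by (auto simp: homogeneous_def[of "m + k"] mul_homogeneous_apply dest: append_in_comps
      intro!: sum.neutral)

text \<open>The coordinate form of \<open>R\<^sub>I R\<^sub>J = R\<^bsub>I\<cdot>J\<^esub> + R\<^bsub>I\<rhd>J\<^esub>\<close>.\<close>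

lemma ribbon_coeff_mul:
  assumes f: "homogeneous m f" and g: "homogeneous k g" and D: "D \<subseteq> {1..<m + k}"
  shows "ribbon_coeff (mul f g) (m + k) D
    = ribbon_coeff f m (lower_part m D) * ribbon_coeff g k (upper_part m D)"
proof -
  let ?fg = "\<lambda>p. f (fst p) * g (snd p)"
  let ?P = "{p \<in> comps m \<times> comps k. D \<subseteq> Des (fst p @ snd p)}"
  have "ribbon_coeff (mul f g) (m + k) D
      = (\<Sum>w | w \<in> comps (m + k) \<and> D \<subseteq> Des w. \<Sum>p | p \<in> ?P \<and> fst p @ snd p = w. ?fg p)"
    unfolding ribbon_coeff_def mul_homogeneous_apply[OF f g] by (intro sum.cong) auto
  also have "\<dots> = sum ?fg ?P"
    using finite_comps by (intro sum.group) (auto intro: append_in_comps)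
  also have "?P = {a \<in> comps m. lower_part m D \<subseteq> Des a} \<times> {b \<in> comps k. upper_part m D \<subseteq> Des b}"
  proof (rule set_eqI)
    fix p :: "nat list \<times> nat list"
    show "p \<in> ?P \<longleftrightarrow> p \<in> {a \<in> comps m. lower_part m D \<subseteq> Des a} \<times> {b \<in> comps k. upper_part m D \<subseteq> Des b}"
      using subset_Des_append_iff[OF _ _ D, of "fst p" "snd p"] by (cases p) auto
  qed
  also have "sum ?fg \<dots> = ribbon_coeff f m (lower_part m D) * ribbon_coeff g k (upper_part m D)"
    by (simp add: ribbon_coeff_def sum_product sum.cartesian_product case_prod_beta)
  finally show ?thesis .
qed


section \<open>The identity \<open>S~\<^sub>n = 2 H\<^sub>n\<close>\<close>

lemma Des_replicate_one: "Des (replicate k 1) = {1..<k}"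
proof (induction k)
  case (Suc k)
  then show ?case
    by (cases k) (auto simp: Des_Cons image_iff intro: exI[of _ "_ - 1"])
qed simp

lemma Des_replicate_one_append: "0 < m \<Longrightarrow> Des (replicate k 1 @ [m]) = {1..k}"
  by (induction k) (auto simp: Des_Cons image_iff intro: exI[of _ "_ - 1"])

lemma replicate_one_in_comps: "replicate k 1 \<in> comps k"
  by (auto simp: comps_def sum_list_replicate)

lemma replicate_one_append_in_comps: "0 < m \<Longrightarrow> replicate k 1 @ [m] \<in> comps (k + m)"
  by (auto simp: comps_def sum_list_replicate)

lemma homogeneous_Sn: "homogeneous m (Sn m)"
  unfolding Sn_def by (rule homogeneous_sw) (simp add: comps_def)

lemma ribbon_coeff_Sn: "ribbon_coeff (Sn m) m E = (if E = {} then 1 else 0)"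
  by (simp add: Sn_def ribbon_coeff_sw comps_def)

lemma homogeneous_Lam: "homogeneous k (Lam k)"
  unfolding Lam_def by (rule homogeneous_ribbon[OF replicate_one_in_comps])

lemma ribbon_coeff_Lam:
  assumes "E \<subseteq> {1..<k}"
  shows "ribbon_coeff (Lam k) k E = (if E = {1..<k} then 1 else 0)"
  using ribbon_coeff_ribbon[OF replicate_one_in_comps assms] by (simp only: Lam_def Des_replicate_one)

lemma ribbon_coeff_hook:
  assumes "k < n" "D \<subseteq> {1..<n}"
  shows "ribbon_coeff (ribbon (replicate k 1 @ [n - k])) n D = (if D = {1..k} then 1 else 0)"
proof -
  have "replicate k 1 @ [n - k] \<in> comps n"
    using replicate_one_append_in_comps[of "n - k" k] assms(1) by simp
  from ribbon_coeff_ribbon[OF this assms(2)] show ?thesis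
    using assms(1) by (simp only: Des_replicate_one_append zero_less_diff)
qed

lemma upper_part_eq_empty_iff: "upper_part k D = {} \<longleftrightarrow> D \<subseteq> {..k}"
proof
  assume empty: "upper_part k D = {}"
  show "D \<subseteq> {..k}"
  proof
    fix d
    assume "d \<in> D"
    show "d \<in> {..k}"
    proof (rule ccontr)
      assume "d \<notin> {..k}"
      then obtain e where "0 < e" "d = k + e"
        using less_imp_add_positive by (metis atMost_iff not_le)
      then have "e \<in> upper_part k D"
        using \<open>d \<in> D\<close> by (simp add: upper_part_def)
      then show False
        using empty by simp
    qed
  qed
qed (auto simp: upper_part_def)

lemma ribbon_coeff_Lam_mul_Sn:
  assumes k: "k \<le> n" and D: "D \<subseteq> {1..<n}"
  shows "ribbon_coeff (mul (Lam k) (Sn (n - k))) n D = (if {1..<k} \<subseteq> D \<and> D \<subseteq> {..k} then 1 else 0)"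
proof -
  have "ribbon_coeff (mul (Lam k) (Sn (n - k))) (k + (n - k)) D
      = ribbon_coeff (Lam k) k (lower_part k D) * ribbon_coeff (Sn (n - k)) (n - k) (upper_part k D)"
    using k D by (intro ribbon_coeff_mul homogeneous_Lam homogeneous_Sn) auto
  moreover have "lower_part k D \<subseteq> {1..<k}"
    using D by (auto simp: lower_part_def)
  moreover have "lower_part k D = {1..<k} \<longleftrightarrow> {1..<k} \<subseteq> D"
    using D by (auto simp: lower_part_def)
  ultimately show ?thesis
    using k by (simp add: ribbon_coeff_Lam ribbon_coeff_Sn upper_part_eq_empty_iff)
qed

lemma interval_sandwich_iff:
  fixes D :: "nat set"
  assumes "0 \<notin> D"
  shows "{1..<k} \<subseteq> D \<and> D \<subseteq> {..k} \<longleftrightarrow> D = {1..<k} \<or> D = {1..k}"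
proof
  assume *: "{1..<k} \<subseteq> D \<and> D \<subseteq> {..k}"
  have upper: "D \<subseteq> insert k {1..<k}"
    using * assms by (auto simp: subset_iff Suc_le_eq)
  show "D = {1..<k} \<or> D = {1..k}"
  proof (cases "k \<in> D")
    case True
    then have "k \<noteq> 0"
      using assms by metis
    then have "{1..k} = insert k {1..<k}"
      by auto
    then show ?thesis
      using * upper True by auto
  qed (use * upper in auto)
qed auto

lemma count_interval_sandwiches:
  fixes D :: "nat set"
  assumes D: "D \<subseteq> {1..<n}" and n: "1 \<le> n"
  shows "(\<Sum>k\<le>n. if {1..<k} \<subseteq> D \<and> D \<subseteq> {..k} then 1 else 0)
    = 2 * (\<Sum>k<n. if D = {1..k} then (1::rat) else 0)"
proof -
  have sandwich: "{1..<k} \<subseteq> D \<and> D \<subseteq> {..k} \<longleftrightarrow> D = {1..<k} \<or> D = {1..k}" for k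
    using D by (intro interval_sandwich_iff) auto
  show ?thesis
  proof (cases "\<exists>j<n. D = {1..j}")
    case True
    then obtain j where j: "j < n" "D = {1..j}"
      by blast
    have "D = {1..<k} \<or> D = {1..k} \<longleftrightarrow> k = j \<or> k = Suc j" for k
      using j by (cases k) (auto simp: atLeastLessThanSuc_atLeastAtMost)
    then have "(\<Sum>k\<le>n. if {1..<k} \<subseteq> D \<and> D \<subseteq> {..k} then 1 else 0)
        = (\<Sum>k\<le>n. (if k = j then 1 else 0) + (if k = Suc j then (1::rat) else 0))"
      using sandwich by (intro sum.cong) auto
    also have "\<dots> = 2"
      using j by (simp add: sum.distrib)
    moreover have "(\<Sum>k<n. if D = {1..k} then (1::rat) else 0) = (\<Sum>k<n. if k = j then 1 else 0)"
      using j by (intro sum.cong) auto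
    ultimately show ?thesis
      using j by simp
  next
    case False
    have not_initial: "D \<noteq> {1..j}" if "j \<le> n" for j
      using False D n that by (cases "j = n") auto
    have "\<not> (D = {1..<k} \<or> D = {1..k})" if "k \<le> n" for k
      using that not_initial[of k] not_initial[of "k - 1"]
      by (cases k) (simp_all add: atLeastLessThanSuc_atLeastAtMost)
    then show ?thesis
      using False sandwich by auto
  qed
qed

lemma Stilde_eq_two_H:
  assumes n: "1 \<le> n"
  shows "Stilde n = smul 2 (H n)"
proof (rule homogeneous_eqI)
  show "homogeneous n (Stilde n)"
    unfolding Stilde_def
    by (intro homogeneous_sum) (metis homogeneous_Lam homogeneous_Sn homogeneous_mul atMost_iff
        le_add_diff_inverse)
  show "homogeneous n (smul 2 (H n))"
    unfolding H_def
    by (intro homogeneous_smul homogeneous_sum homogeneous_ribbon)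
      (metis lessThan_iff replicate_one_append_in_comps zero_less_diff le_add_diff_inverse
        less_imp_le_nat)
next
  fix D
  assume D: "D \<subseteq> {1..<n}"
  have "ribbon_coeff (Stilde n) n D = (\<Sum>k\<le>n. if {1..<k} \<subseteq> D \<and> D \<subseteq> {..k} then 1 else 0)"
    unfolding Stilde_def ribbon_coeff_sum using D by (simp add: ribbon_coeff_Lam_mul_Sn)
  moreover have "ribbon_coeff (H n) n D = (\<Sum>k<n. if D = {1..k} then 1 else 0)"
    unfolding H_def ribbon_coeff_sum using D by (intro sum.cong refl ribbon_coeff_hook) auto
  ultimately show "ribbon_coeff (Stilde n) n D = ribbon_coeff (smul 2 (H n)) n D"
    using count_interval_sandwiches[OF D n] by (simp add: ribbon_coeff_smul)
qed


section \<open>Peak sets and the spaces \<open>P\<^sub>n\<close>\<close>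

definition peak_set :: "nat set \<Rightarrow> nat set" where
  "peak_set D = {a \<in> D. a \<noteq> 1 \<and> a - 1 \<notin> D}"

lemma HP_eq_peak_set: "HP J = peak_set (Des J)"
  by (simp add: HP_def peak_set_def)

lemma peak_set_subset: "peak_set D \<subseteq> D"
  by (auto simp: peak_set_def)

lemma peak_set_idem: "peak_set (peak_set D) = peak_set D"
  by (auto simp: peak_set_def)

lemma peak_set_lower_part: "peak_set (lower_part m D) = lower_part m (peak_set D)"
  by (auto simp: peak_set_def lower_part_def)

lemma peak_set_upper_part: "peak_set (upper_part m D) = upper_part m (peak_set D) - {1}"
  by (auto simp: peak_set_def upper_part_def)

lemma peak_set_bounds: "D \<subseteq> {1..<n} \<Longrightarrow> peak_set D \<subseteq> {2..<n}"
  by (force simp: peak_set_def)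

lemma Suc_notin_peak_set: "a \<in> peak_set D \<Longrightarrow> Suc a \<notin> peak_set D"
  by (auto simp: peak_set_def)

definition peak_invariant :: "nat \<Rightarrow> nsym \<Rightarrow> bool" where
  "peak_invariant n f \<longleftrightarrow> homogeneous n f \<and>
    (\<forall>D D'. D \<subseteq> {1..<n} \<longrightarrow> D' \<subseteq> {1..<n} \<longrightarrow> peak_set D = peak_set D'
      \<longrightarrow> ribbon_coeff f n D = ribbon_coeff f n D')"

lemma peak_invariantI:
  assumes "homogeneous n f"
    and "\<And>D D'. D \<subseteq> {1..<n} \<Longrightarrow> D' \<subseteq> {1..<n} \<Longrightarrow> peak_set D = peak_set D'
      \<Longrightarrow> ribbon_coeff f n D = ribbon_coeff f n D'"
  shows "peak_invariant n f"
  unfolding peak_invariant_def using assms by blast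

lemma peak_invariant_homogeneous: "peak_invariant n f \<Longrightarrow> homogeneous n f"
  by (simp add: peak_invariant_def)

lemma peak_invariantD:
  "peak_invariant n f \<Longrightarrow> D \<subseteq> {1..<n} \<Longrightarrow> D' \<subseteq> {1..<n} \<Longrightarrow> peak_set D = peak_set D'
    \<Longrightarrow> ribbon_coeff f n D = ribbon_coeff f n D'"
  unfolding peak_invariant_def by blast

lemma peak_invariant_zero: "peak_invariant n 0"
  by (simp add: peak_invariant_def homogeneous_zero ribbon_coeff_zero)

lemma peak_invariant_add:
  assumes f: "peak_invariant n f" and g: "peak_invariant n g"
  shows "peak_invariant n (f + g)"
proof (rule peak_invariantI)
  show "homogeneous n (f + g)"
    using f g by (intro homogeneous_add peak_invariant_homogeneous)
  fix D D'
  assume "D \<subseteq> {1..<n}" "D' \<subseteq> {1..<n}" "peak_set D = peak_set D'"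
  from peak_invariantD[OF f this] peak_invariantD[OF g this]
  show "ribbon_coeff (f + g) n D = ribbon_coeff (f + g) n D'"
    by (simp add: ribbon_coeff_add)
qed

lemma peak_invariant_smul:
  assumes f: "peak_invariant n f"
  shows "peak_invariant n (smul c f)"
proof (rule peak_invariantI)
  show "homogeneous n (smul c f)"
    using f by (intro homogeneous_smul peak_invariant_homogeneous)
  fix D D'
  assume "D \<subseteq> {1..<n}" "D' \<subseteq> {1..<n}" "peak_set D = peak_set D'"
  from peak_invariantD[OF f this]
  show "ribbon_coeff (smul c f) n D = ribbon_coeff (smul c f) n D'"
    by (simp add: ribbon_coeff_smul)
qed

lemma peak_invariant_diff: "peak_invariant n f \<Longrightarrow> peak_invariant n g \<Longrightarrow> peak_invariant n (f - g)"
  unfolding diff_eq_add_smul by (intro peak_invariant_add peak_invariant_smul)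

lemma peak_invariant_mul:
  assumes f: "peak_invariant m f" and g: "peak_invariant k g"
  shows "peak_invariant (m + k) (mul f g)"
proof (rule peak_invariantI)
  note hf = peak_invariant_homogeneous[OF f] and hg = peak_invariant_homogeneous[OF g]
  show "homogeneous (m + k) (mul f g)"
    using hf hg by (rule homogeneous_mul)
  fix D D'
  assume D: "D \<subseteq> {1..<m + k}" and D': "D' \<subseteq> {1..<m + k}" and peaks: "peak_set D = peak_set D'"
  have parts: "lower_part m E \<subseteq> {1..<m}" "upper_part m E \<subseteq> {1..<k}" if "E \<subseteq> {1..<m + k}" for E
    using that by (auto simp: lower_part_def upper_part_def)
  have "ribbon_coeff f m (lower_part m D) = ribbon_coeff f m (lower_part m D')"
    using parts[OF D] parts[OF D'] peaks by (intro peak_invariantD[OF f]) (simp_all add: peak_set_lower_part)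
  moreover have "ribbon_coeff g k (upper_part m D) = ribbon_coeff g k (upper_part m D')"
    using parts[OF D] parts[OF D'] peaks by (intro peak_invariantD[OF g]) (simp_all add: peak_set_upper_part)
  ultimately show "ribbon_coeff (mul f g) (m + k) D = ribbon_coeff (mul f g) (m + k) D'"
    by (simp add: ribbon_coeff_mul[OF hf hg D] ribbon_coeff_mul[OF hf hg D'])
qed

lemma homogeneous_PiP: "homogeneous n (PiP n P)"
  unfolding PiP_def by (rule homogeneous_sum) (simp add: homogeneous_ribbon)

lemma ribbon_coeff_PiP:
  assumes D: "D \<subseteq> {1..<n}"
  shows "ribbon_coeff (PiP n P) n D = (if peak_set D = P then 1 else 0)"
proof -
  obtain J0 where J0: "J0 \<in> comps n" "Des J0 = D"
    using Des_surj[OF D] by blast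
  have "ribbon_coeff (PiP n P) n D = (\<Sum>J | J \<in> comps n \<and> HP J = P. if J0 = J then 1 else 0)"
    unfolding PiP_def ribbon_coeff_sum using J0 D
    by (intro sum.cong refl) (auto simp: ribbon_coeff_ribbon dest: Des_eqD)
  also have "\<dots> = (if peak_set D = P then 1 else 0)"
    using J0 finite_comps by (simp add: HP_eq_peak_set)
  finally show ?thesis .
qed

lemma peak_invariant_PiP: "peak_invariant n (PiP n P)"
  by (simp add: peak_invariant_def homogeneous_PiP ribbon_coeff_PiP)

lemma peak_expansion:
  assumes f: "peak_invariant n f"
  shows "f = (\<Sum>P\<in>HP ` comps n. smul (ribbon_coeff f n P) (PiP n P))"
proof -
  have "f = (\<Sum>J\<in>comps n. smul (ribbon_coeff f n (Des J)) (ribbon J))"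
    using f by (intro homogeneous_ribbon_expansion peak_invariant_homogeneous)
  also have "\<dots> = (\<Sum>P\<in>HP ` comps n. \<Sum>J | J \<in> comps n \<and> HP J = P. smul (ribbon_coeff f n (Des J)) (ribbon J))"
    using finite_comps by (rule sum.image_gen)
  also have "\<dots> = (\<Sum>P\<in>HP ` comps n. \<Sum>J | J \<in> comps n \<and> HP J = P. smul (ribbon_coeff f n P) (ribbon J))"
  proof (intro sum.cong refl)
    fix P J
    assume "J \<in> {J. J \<in> comps n \<and> HP J = P}"
    then have J: "Des J \<subseteq> {1..<n}" and P: "P = peak_set (Des J)"
      using Des_subset by (auto simp: HP_eq_peak_set)
    then have "P \<subseteq> {1..<n}" "peak_set (Des J) = peak_set P"
      using peak_set_subset peak_set_idem by blast+
    with J show "smul (ribbon_coeff f n (Des J)) (ribbon J) = smul (ribbon_coeff f n P) (ribbon J)"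
      using peak_invariantD[OF f] by metis
  qed
  also have "\<dots> = (\<Sum>P\<in>HP ` comps n. smul (ribbon_coeff f n P) (PiP n P))"
    by (simp add: PiP_def smul_sum)
  finally show ?thesis .
qed

lemma Pn_eq_peak_invariant: "Pn n = {f. peak_invariant n f}"
proof
  show "Pn n \<subseteq> {f. peak_invariant n f}"
    unfolding Pn_def
    by (rule lspan_minimal) (auto intro: peak_invariant_zero peak_invariant_add peak_invariant_smul
        peak_invariant_PiP)
  show "{f. peak_invariant n f} \<subseteq> Pn n"
  proof
    fix f
    assume "f \<in> {f. peak_invariant n f}"
    then have "f = (\<Sum>P\<in>HP ` comps n. smul (ribbon_coeff f n P) (PiP n P))"
      by (simp add: peak_expansion)
    also have "\<dots> \<in> Pn n"
      unfolding Pn_def by (intro lspan_sum lspan_smul lspan_superset) blast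
    finally show "f \<in> Pn n" .
  qed
qed


section \<open>The products \<open>T\<^sup>I\<close> and a basis of \<open>P\<^sub>n\<close>\<close>

definition evens :: "nat \<Rightarrow> nat set" where
  "evens k = {2 * j | j. 1 \<le> j \<and> j \<le> k}"

lemma evens_0 [simp]: "evens 0 = {}"
  by (auto simp: evens_def)

lemma evens_Suc: "evens (Suc k) = insert 2 ((+) 2 ` evens k)"
proof (intro equalityI subsetI)
  fix x assume "x \<in> evens (Suc k)"
  then obtain j where j: "x = 2 * j" "1 \<le> j" "j \<le> Suc k" by (auto simp: evens_def)
  show "x \<in> insert 2 ((+) 2 ` evens k)"
  proof (cases "j = 1")
    case True then show ?thesis using j by simp
  next
    case False
    then have "x = 2 + 2 * (j - 1)" "1 \<le> j - 1" "j - 1 \<le> k" using j by auto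
    then show ?thesis unfolding evens_def by blast
  qed
next
  fix x assume "x \<in> insert 2 ((+) 2 ` evens k)"
  then show "x \<in> evens (Suc k)"
  proof
    assume "x = 2" then show ?thesis unfolding evens_def by (intro CollectI exI[of _ 1]) auto
  next
    assume "x \<in> (+) 2 ` evens k"
    then obtain j where "x = 2 + 2 * j" "1 \<le> j" "j \<le> k" by (auto simp: evens_def)
    then show ?thesis unfolding evens_def by (intro CollectI exI[of _ "Suc j"]) auto
  qed
qed

lemma evens_subset: "evens k \<subseteq> {2..2 * k}"
  by (auto simp: evens_def)

lemma even_if_mem_evens: "x \<in> evens k \<Longrightarrow> even x"
  by (auto simp: evens_def)

lemma evens_subset_odd:
  assumes "odd i"
  shows "evens (i div 2) \<subseteq> {2..<i}"
proof
  fix x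
  assume "x \<in> evens (i div 2)"
  then have "x \<in> {2..2 * (i div 2)}"
    using evens_subset by blast
  then show "x \<in> {2..<i}"
    using odd_two_times_div_two_succ[OF assms] by auto
qed

lemma Suc_mem_evens: "odd i \<Longrightarrow> odd i' \<Longrightarrow> i < i' \<Longrightarrow> Suc i \<in> evens (i' div 2)"
  unfolding evens_def by (rule CollectI, rule exI[of _ "Suc i div 2"]) presburger

lemma peak_set_evens: "peak_set (evens k) = evens k"
proof -
  have "x - 1 \<notin> evens k" "x \<noteq> 1" if "x \<in> evens k" for x
    using that even_if_mem_evens[of x k] even_if_mem_evens[of "x - 1" k] evens_subset[of k]
    by (auto simp: subset_iff)
  then show ?thesis
    by (auto simp: peak_set_def)
qed

lemma eq_evens_if_peak_set_eq:
  assumes D: "D \<subseteq> {1..<2 * k + 1}" and peaks: "peak_set D = evens k"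
  shows "D = evens k"
proof
  show "evens k \<subseteq> D"
    using peaks peak_set_subset by blast
  show "D \<subseteq> evens k"
  proof
    fix x
    assume x: "x \<in> D"
    then have bounds: "1 \<le> x" "x < 2 * k + 1"
      using D atLeastLessThan_iff by blast+
    show "x \<in> evens k"
    proof (cases "even x")
      case True
      then obtain j where "x = 2 * j"
        by blast
      moreover have "1 \<le> j" "j \<le> k"
        using bounds calculation by linarith+
      ultimately show ?thesis
        unfolding evens_def by blast
    next
      case False
      then obtain j where j: "x = 2 * j + 1"
        using oddE by blast
      then have "x + 1 = 2 * Suc j" "1 \<le> Suc j" "Suc j \<le> k"
        using bounds by auto
      then have "x + 1 \<in> evens k"
        unfolding evens_def by blast
      then have "x + 1 - 1 \<notin> D"
        using peaks unfolding peak_set_def by blast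
      then show ?thesis
        using x by simp
    qed
  qed
qed

lemma twos_one_in_comps: "replicate k 2 @ [1] \<in> comps (2 * k + 1)"
  by (induction k) (auto simp: comps_def sum_list_replicate)

lemma Des_twos_one: "Des (replicate k 2 @ [1]) = evens k"
  by (induction k) (simp_all add: Des_Cons evens_Suc)

lemma twos_one_in_comps_odd:
  assumes "odd i"
  shows "replicate (i div 2) 2 @ [1] \<in> comps i"
  using twos_one_in_comps[of "i div 2"] assms by simp

lemma homogeneous_Todd: "odd i \<Longrightarrow> homogeneous i (Todd i)"
  unfolding Todd_def by (intro homogeneous_ribbon twos_one_in_comps_odd)

lemma ribbon_coeff_Todd:
  assumes "odd i" "D \<subseteq> {1..<i}"
  shows "ribbon_coeff (Todd i) i D = (if D = evens (i div 2) then 1 else 0)"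
  using ribbon_coeff_ribbon[OF twos_one_in_comps_odd[OF assms(1)] assms(2)] by (simp only: Todd_def Des_twos_one)

lemma peak_invariant_Todd:
  assumes i: "odd i"
  shows "peak_invariant i (Todd i)"
proof (rule peak_invariantI)
  show "homogeneous i (Todd i)"
    using i by (rule homogeneous_Todd)
  fix D D'
  assume D: "D \<subseteq> {1..<i}" and D': "D' \<subseteq> {1..<i}" and peaks: "peak_set D = peak_set D'"
  have "{1..<i} = {1..<2 * (i div 2) + 1}"
    using i by simp
  then have "D = evens (i div 2) \<longleftrightarrow> D' = evens (i div 2)"
    using eq_evens_if_peak_set_eq[of D "i div 2"] eq_evens_if_peak_set_eq[of D' "i div 2"]
      D D' peaks peak_set_evens[of "i div 2"] by auto
  then show "ribbon_coeff (Todd i) i D = ribbon_coeff (Todd i) i D'"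
    by (simp add: ribbon_coeff_Todd[OF i D] ribbon_coeff_Todd[OF i D'])
qed

lemma Tprod_Nil [simp]: "Tprod [] = one_s"
  by (simp add: Tprod_def)

lemma Tprod_Cons [simp]: "Tprod (i # I) = mul (Todd i) (Tprod I)"
  by (simp add: Tprod_def)

lemma oddcomps_Nil [simp]: "[] \<in> oddcomps n \<longleftrightarrow> n = 0"
  by (simp add: oddcomps_def)

lemma oddcomps_Cons [simp]: "i # I \<in> oddcomps n \<longleftrightarrow> odd i \<and> i \<le> n \<and> I \<in> oddcomps (n - i)"
  by (auto simp: oddcomps_def intro: odd_pos)

lemma oddcomps_0: "I \<in> oddcomps 0 \<Longrightarrow> I = []"
  by (cases I) (auto dest: odd_pos)

lemma finite_oddcomps: "finite (oddcomps n)"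
  using finite_comps by (simp add: oddcomps_def)

lemma homogeneous_one: "homogeneous 0 one_s"
  unfolding one_s_def by (rule homogeneous_sw) simp

lemma peak_invariant_one: "peak_invariant 0 one_s"
  by (rule peak_invariantI[OF homogeneous_one]) auto

lemma peak_invariant_Tprod: "I \<in> oddcomps n \<Longrightarrow> peak_invariant n (Tprod I)"
proof (induction I arbitrary: n)
  case (Cons i I)
  then have "peak_invariant (i + (n - i)) (mul (Todd i) (Tprod I))"
    by (intro peak_invariant_mul peak_invariant_Todd) auto
  then show ?case
    using Cons.prems by simp
qed (simp add: peak_invariant_one)

text \<open>Cutting \<open>D\<close> at the partial sums of \<open>I\<close>, the block of length \<open>i\<close>
  contains exactly the descents \<open>2, 4, \<dots>, i - 1\<close> relative to its start; the cut points themselves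
  are unconstrained.\<close>

fun evens_in_blocks :: "nat list \<Rightarrow> nat set \<Rightarrow> bool" where
  "evens_in_blocks [] D \<longleftrightarrow> D = {}"
| "evens_in_blocks (i # I) D \<longleftrightarrow>
    lower_part i D = evens (i div 2) \<and> evens_in_blocks I (upper_part i D)"

fun block_peaks :: "nat list \<Rightarrow> nat set" where
  "block_peaks [] = {}"
| "block_peaks (i # I) = evens (i div 2) \<union> (+) i ` block_peaks I"

lemma ribbon_coeff_Tprod:
  "I \<in> oddcomps n \<Longrightarrow> D \<subseteq> {1..<n} \<Longrightarrow> ribbon_coeff (Tprod I) n D = (if evens_in_blocks I D then 1 else 0)"
proof (induction I arbitrary: n D)
  case Nil
  then show ?case
    by (simp add: one_s_def ribbon_coeff_sw)
next
  case (Cons i I)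
  then have i: "odd i" "i \<le> n" and I: "I \<in> oddcomps (n - i)"
    by auto
  have D: "D \<subseteq> {1..<i + (n - i)}"
    using Cons.prems i by simp
  have "lower_part i D \<subseteq> {1..<i}" "upper_part i D \<subseteq> {1..<n - i}"
    using D by (auto simp: lower_part_def upper_part_def)
  moreover have "ribbon_coeff (Tprod (i # I)) (i + (n - i)) D
      = ribbon_coeff (Todd i) i (lower_part i D) * ribbon_coeff (Tprod I) (n - i) (upper_part i D)"
    unfolding Tprod_Cons using I i
    by (intro ribbon_coeff_mul[OF _ _ D] homogeneous_Todd peak_invariant_homogeneous
        peak_invariant_Tprod)
  ultimately show ?case
    using i Cons.IH[OF I] by (simp add: ribbon_coeff_Todd)
qed

lemma block_peaks_subset: "I \<in> oddcomps n \<Longrightarrow> block_peaks I \<subseteq> {2..<n}"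
proof (induction I arbitrary: n)
  case (Cons i I)
  then have "odd i" "i \<le> n" "block_peaks I \<subseteq> {2..<n - i}"
    by auto
  then show ?case
    using evens_subset_odd[of i] by force
qed simp

lemma lower_part_block_peaks_Cons:
  "odd i \<Longrightarrow> I \<in> oddcomps m \<Longrightarrow> lower_part i (block_peaks (i # I)) = evens (i div 2)"
  using evens_subset_odd[of i] block_peaks_subset[of I m] by (force simp: lower_part_def)

lemma upper_part_block_peaks_Cons:
  "odd i \<Longrightarrow> I \<in> oddcomps m \<Longrightarrow> upper_part i (block_peaks (i # I)) = block_peaks I"
  using evens_subset_odd[of i] block_peaks_subset[of I m] by (force simp: upper_part_def)

lemma evens_in_blocks_block_peaks: "I \<in> oddcomps n \<Longrightarrow> evens_in_blocks I (block_peaks I)"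
proof (induction I arbitrary: n)
  case (Cons i I)
  then have i: "odd i" and I: "I \<in> oddcomps (n - i)"
    by auto
  show ?case
    using Cons.IH[OF I] lower_part_block_peaks_Cons[OF i I] upper_part_block_peaks_Cons[OF i I]
    by (simp del: block_peaks.simps)
qed simp

lemma block_peaks_subset_peak_set: "I \<in> oddcomps n \<Longrightarrow> evens_in_blocks I D \<Longrightarrow> block_peaks I \<subseteq> peak_set D"
proof (induction I arbitrary: n D)
  case (Cons i I)
  then have I: "I \<in> oddcomps (n - i)" and lower: "lower_part i D = evens (i div 2)"
    and upper: "evens_in_blocks I (upper_part i D)"
    by auto
  have "evens (i div 2) = lower_part i (peak_set D)"
    using peak_set_lower_part[of i D] lower peak_set_evens by simp
  moreover have "block_peaks I \<subseteq> upper_part i (peak_set D)"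
    using Cons.IH[OF I upper] peak_set_upper_part[of i D] by blast
  ultimately show ?case
    by (auto simp: lower_part_def upper_part_def)
qed simp

lemma peak_set_block_peaks: "I \<in> oddcomps n \<Longrightarrow> peak_set (block_peaks I) = block_peaks I"
  using block_peaks_subset_peak_set[OF _ evens_in_blocks_block_peaks] peak_set_subset by blast

lemma Suc_notin_block_peaks_Cons: "odd i \<Longrightarrow> I \<in> oddcomps m \<Longrightarrow> Suc i \<notin> block_peaks (i # I)"
  using evens_subset_odd[of i] block_peaks_subset[of I m] by force

lemma inj_on_block_peaks: "inj_on block_peaks (oddcomps n)"
proof -
  have "I = I'" if "I \<in> oddcomps n" "I' \<in> oddcomps n" "block_peaks I = block_peaks I'" for I I'
    using that
  proof (induction I arbitrary: I' n)
    case Nil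
    then show ?case
      using oddcomps_0 by auto
  next
    case (Cons i I)
    then have i: "odd i" "I \<in> oddcomps (n - i)"
      by auto
    then have "n \<noteq> 0"
      using Cons.prems(1) odd_pos by fastforce
    then obtain i' J where I': "I' = i' # J"
      using Cons.prems(2) by (cases I') auto
    then have i': "odd i'" "J \<in> oddcomps (n - i')"
      using Cons.prems(2) by auto
    have "\<not> i < i'" "\<not> i' < i"
      using Suc_notin_block_peaks_Cons[OF i] Suc_notin_block_peaks_Cons[OF i'] Suc_mem_evens i i'
        Cons.prems(3) unfolding I' by auto
    then have "i = i'"
      by simp
    then have "block_peaks I = block_peaks J"
      using Cons.prems(3) upper_part_block_peaks_Cons[OF i] upper_part_block_peaks_Cons[OF i']
      unfolding I' by metis
    then show ?case
      using Cons.IH[OF i(2)] i' \<open>i = i'\<close> I' by simp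
  qed
  then show ?thesis
    by (auto intro: inj_onI)
qed

lemma upper_part_image_shift: "(+) m ` upper_part m P = {p \<in> P. m < p}"
  by (auto simp: upper_part_def image_iff) (metis less_imp_add_positive)

lemma upper_part_peaks:
  assumes P: "P \<subseteq> {2..<n}" "\<forall>a\<in>P. Suc a \<notin> P" and "Suc m \<notin> P"
  shows "upper_part m P \<subseteq> {2..<n - m}" "\<forall>a\<in>upper_part m P. Suc a \<notin> upper_part m P"
proof -
  show "upper_part m P \<subseteq> {2..<n - m}"
  proof
    fix e
    assume "e \<in> upper_part m P"
    then have "0 < e" "m + e \<in> P"
      by (auto simp: upper_part_def)
    moreover from this have "e \<noteq> 1"
      using assms(3) by auto
    ultimately show "e \<in> {2..<n - m}"
      using P(1) by auto
  qed
  show "\<forall>a\<in>upper_part m P. Suc a \<notin> upper_part m P"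
    using P(2) by (auto simp: upper_part_def)
qed

lemma block_peaks_Cons_one: "block_peaks (1 # I) = (+) 1 ` block_peaks I"
  by simp

lemma block_peaks_Cons_add_two: "block_peaks ((i + 2) # I) = insert 2 ((+) 2 ` block_peaks (i # I))"
proof -
  have "(i + 2) div 2 = Suc (i div 2)"
    by simp
  then show ?thesis
    by (simp add: evens_Suc image_Un image_image add.assoc)
qed

lemma block_peaks_surj:
  "P \<subseteq> {2..<n} \<Longrightarrow> \<forall>a\<in>P. Suc a \<notin> P \<Longrightarrow> \<exists>I\<in>oddcomps n. block_peaks I = P"
proof (induction n arbitrary: P rule: less_induct)
  case (less n)
  show ?case
  proof (cases "n = 0")
    case True
    then show ?thesis
      using less.prems by (intro bexI[of _ "[]"]) auto
  next
    case n: False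
    show ?thesis
    proof (cases "2 \<in> P")
      case False
      then have "upper_part 1 P \<subseteq> {2..<n - 1}" "\<forall>a\<in>upper_part 1 P. Suc a \<notin> upper_part 1 P"
        using upper_part_peaks[OF less.prems, of 1] False by (simp_all add: numeral_2_eq_2)
      moreover have "n - 1 < n"
        using n by simp
      ultimately obtain I where I: "I \<in> oddcomps (n - 1)" "block_peaks I = upper_part 1 P"
        using less.IH by blast
      have "block_peaks (1 # I) = (+) 1 ` upper_part 1 P"
        by (simp only: block_peaks_Cons_one I(2))
      also have "\<dots> = {p \<in> P. 1 < p}"
        by (rule upper_part_image_shift)
      also have "\<dots> = P"
        using less.prems(1) by auto
      finally have "block_peaks (1 # I) = P" .
      moreover have "1 # I \<in> oddcomps n"
        using I n by simp
      ultimately show ?thesis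
        by blast
    next
      case True
      then have "3 \<notin> P" "3 \<le> n"
        using less.prems by (auto simp: numeral_3_eq_3)
      then have "upper_part 2 P \<subseteq> {2..<n - 2}" "\<forall>a\<in>upper_part 2 P. Suc a \<notin> upper_part 2 P"
        using upper_part_peaks[OF less.prems, of 2] by (simp_all add: numeral_3_eq_3)
      moreover have "n - 2 < n"
        using \<open>3 \<le> n\<close> by simp
      ultimately obtain I where I: "I \<in> oddcomps (n - 2)" "block_peaks I = upper_part 2 P"
        using less.IH by blast
      then obtain i J where IJ: "I = i # J"
        using \<open>3 \<le> n\<close> by (cases I) auto
      have "block_peaks ((i + 2) # J) = insert 2 ((+) 2 ` upper_part 2 P)"
        by (simp only: block_peaks_Cons_add_two flip: IJ I(2))
      also have "\<dots> = insert 2 {p \<in> P. 2 < p}"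
        by (simp only: upper_part_image_shift)
      also have "\<dots> = P"
        using True less.prems(1) by auto
      finally have "block_peaks ((i + 2) # J) = P" .
      moreover have "(i + 2) # J \<in> oddcomps n"
        using I IJ \<open>3 \<le> n\<close> by auto
      ultimately show ?thesis
        by blast
    qed
  qed
qed

lemma Tprod_triangular:
  assumes "I \<in> oddcomps n" "D \<subseteq> {1..<n}" "ribbon_coeff (Tprod I) n D \<noteq> 0"
  shows "block_peaks I \<subseteq> peak_set D"
proof -
  have "evens_in_blocks I D"
    using assms ribbon_coeff_Tprod[OF assms(1,2)] by (simp split: if_splits)
  then show ?thesis
    by (rule block_peaks_subset_peak_set[OF assms(1)])
qed

lemma ribbon_coeff_Tprod_block_peaks:
  assumes I: "I \<in> oddcomps n"
  shows "ribbon_coeff (Tprod I) n (block_peaks I) = 1"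
proof -
  have "block_peaks I \<subseteq> {1..<n}"
    using block_peaks_subset[OF I] by auto
  then show ?thesis
    using ribbon_coeff_Tprod[OF I] evens_in_blocks_block_peaks[OF I] by simp
qed

lemma PiP_in_span_Tprod: "PiP n P \<in> lspan (Tprod ` oddcomps n)"
proof (induction "n - card P" arbitrary: P rule: less_induct)
  case less
  let ?L = "lspan (Tprod ` oddcomps n)"
  show ?case
  proof (cases "P \<in> HP ` comps n")
    case False
    then have "{J \<in> comps n. HP J = P} = {}"
      by blast
    then have "PiP n P = 0"
      unfolding PiP_def by (simp only: sum.empty)
    then show ?thesis
      by (simp add: lspan_zero)
  next
    case True
    then obtain J0 where J0: "J0 \<in> comps n" and P: "P = peak_set (Des J0)"
      by (auto simp: HP_eq_peak_set)
    have "P \<subseteq> {2..<n}"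
      unfolding P by (rule peak_set_bounds[OF Des_subset[OF J0]])
    moreover have "\<forall>a\<in>P. Suc a \<notin> P"
      unfolding P using Suc_notin_peak_set by blast
    ultimately obtain I where I: "I \<in> oddcomps n" "block_peaks I = P"
      using block_peaks_surj by blast
    define f where "f = Tprod I - PiP n P"
    have terms: "smul (ribbon_coeff f n Q) (PiP n Q) \<in> ?L" if "Q \<in> HP ` comps n" for Q
    proof (cases "ribbon_coeff f n Q = 0")
      case False
      from \<open>Q \<in> HP ` comps n\<close> obtain J where "J \<in> comps n" "Q = peak_set (Des J)"
        by (auto simp: HP_eq_peak_set)
      then have Q: "Q \<subseteq> {1..<n}" "peak_set Q = Q"
        using Des_subset peak_set_subset peak_set_idem by blast+
      then have coeff: "ribbon_coeff f n Q = ribbon_coeff (Tprod I) n Q - (if Q = P then 1 else 0)"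
        by (simp add: f_def ribbon_coeff_diff ribbon_coeff_PiP)
      then have "Q \<noteq> P"
        using False ribbon_coeff_Tprod_block_peaks[OF I(1)] I(2) by auto
      then have "P \<subset> Q"
        using False coeff Tprod_triangular[OF I(1) Q(1)] I(2) Q(2) by auto
      moreover have "finite Q" "card Q \<le> n"
        using Q(1) finite_subset card_mono[OF _ Q(1)] by fastforce+
      ultimately have "n - card Q < n - card P"
        using psubset_card_mono[of Q P] by linarith
      then show ?thesis
        by (intro lspan_smul less.hyps)
    qed (simp add: lspan_zero)
    have "peak_invariant n f"
      unfolding f_def using I(1) by (intro peak_invariant_diff peak_invariant_Tprod peak_invariant_PiP)
    then have "f = (\<Sum>Q\<in>HP ` comps n. smul (ribbon_coeff f n Q) (PiP n Q))"
      by (rule peak_expansion)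
    also have "\<dots> \<in> ?L"
      using terms by (rule lspan_sum)
    finally have "f \<in> ?L" .
    moreover have "Tprod I \<in> ?L"
      using I(1) by (intro lspan_superset) blast
    ultimately have "Tprod I - f \<in> ?L"
      by (intro lspan_diff)
    then show ?thesis
      by (simp add: f_def)
  qed
qed

lemma lspan_Tprod_eq_Pn: "lspan (Tprod ` oddcomps n) = Pn n"
proof
  have "Tprod ` oddcomps n \<subseteq> Pn n"
    using peak_invariant_Tprod by (auto simp: Pn_eq_peak_invariant)
  then show "lspan (Tprod ` oddcomps n) \<subseteq> Pn n"
    by (rule lspan_minimal)
      (auto simp: Pn_eq_peak_invariant intro: peak_invariant_zero peak_invariant_add peak_invariant_smul)
  show "Pn n \<subseteq> lspan (Tprod ` oddcomps n)"
    unfolding Pn_def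
    by (rule lspan_minimal) (auto intro: PiP_in_span_Tprod lspan_zero lspan_add lspan_smul)
qed

lemma Tprod_linear_independent:
  assumes sum_eq_0: "(\<Sum>I\<in>oddcomps n. smul (c I) (Tprod I)) = 0" and I0: "I0 \<in> oddcomps n"
  shows "c I0 = 0"
proof (rule ccontr)
  assume "c I0 \<noteq> 0"
  then obtain Im where Im: "Im \<in> oddcomps n" "c Im \<noteq> 0"
    and minimal: "\<And>I. I \<in> oddcomps n \<and> c I \<noteq> 0 \<Longrightarrow> card (block_peaks Im) \<le> card (block_peaks I)"
    using ex_has_least_nat[of "\<lambda>I. I \<in> oddcomps n \<and> c I \<noteq> 0" I0 "\<lambda>I. card (block_peaks I)"] I0
    by blast
  let ?D = "block_peaks Im"
  have D: "?D \<subseteq> {1..<n}"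
    using block_peaks_subset[OF Im(1)] by auto
  have others: "c I * ribbon_coeff (Tprod I) n ?D = 0" if I: "I \<in> oddcomps n" "I \<noteq> Im" for I
  proof (rule ccontr)
    assume "c I * ribbon_coeff (Tprod I) n ?D \<noteq> 0"
    then have "c I \<noteq> 0" "block_peaks I \<subseteq> ?D"
      using Tprod_triangular[OF I(1) D] peak_set_block_peaks[OF Im(1)] by auto
    moreover have "finite ?D"
      using D finite_subset by blast
    ultimately have "block_peaks I = ?D"
      using minimal I(1) by (intro card_seteq) auto
    then show False
      using inj_on_block_peaks I Im(1) by (auto dest: inj_onD)
  qed
  have "0 = ribbon_coeff (\<Sum>I\<in>oddcomps n. smul (c I) (Tprod I)) n ?D"
    by (simp add: sum_eq_0 ribbon_coeff_zero)
  also have "\<dots> = (\<Sum>I\<in>oddcomps n. c I * ribbon_coeff (Tprod I) n ?D)"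
    by (simp add: ribbon_coeff_sum ribbon_coeff_smul)
  also have "\<dots> = c Im * ribbon_coeff (Tprod Im) n ?D"
    using others by (simp add: sum.remove[OF finite_oddcomps Im(1)] sum.neutral)
  also have "\<dots> = c Im"
    using ribbon_coeff_Tprod_block_peaks[OF Im(1)] by simp
  finally show False
    using Im(2) by simp
qed


section \<open>The peak algebra is generated by the \<open>T\<^bsub>2k+1\<^esub>\<close>\<close>

lemma Pn_subset_calP: "Pn n \<subseteq> calP"
  unfolding calP_def by (auto intro: lspan_superset)

lemma calP_mul_closed: "f \<in> calP \<Longrightarrow> g \<in> calP \<Longrightarrow> mul f g \<in> calP"
  unfolding calP_def
proof (rule lspan_mul_closed)
  fix a b
  assume "a \<in> (\<Union>n. Pn n)" "b \<in> (\<Union>n. Pn n)"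
  then obtain m k where "peak_invariant m a" "peak_invariant k b"
    by (auto simp: Pn_eq_peak_invariant)
  then have "mul a b \<in> Pn (m + k)"
    by (simp add: Pn_eq_peak_invariant peak_invariant_mul)
  then show "mul a b \<in> lspan (\<Union>n. Pn n)"
    by (auto intro: lspan_superset)
qed

lemma zero_in_gen_alg: "0 \<in> gen_alg G"
  using gen_alg.gen_smul[OF gen_alg.gen_one, where c = 0] by simp

lemma lspan_subset_gen_alg: "A \<subseteq> gen_alg G \<Longrightarrow> lspan A \<subseteq> gen_alg G"
  by (rule lspan_minimal) (auto intro: zero_in_gen_alg gen_alg.gen_add gen_alg.gen_smul)

lemma Tprod_in_gen_alg: "I \<in> oddcomps n \<Longrightarrow> Tprod I \<in> gen_alg (range (\<lambda>k. Todd (2 * k + 1)))"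
proof (induction I arbitrary: n)
  case (Cons i I)
  then have "Todd i \<in> range (\<lambda>k. Todd (2 * k + 1))"
    by (auto intro!: image_eqI[of _ _ "i div 2"])
  then show ?case
    using Cons by (auto intro: gen_alg.gen_mul gen_alg.gen_base)
qed (simp add: gen_alg.gen_one)

lemma calP_eq_gen_alg: "calP = gen_alg (range (\<lambda>k. Todd (2 * k + 1)))"
proof
  have "Pn n \<subseteq> gen_alg (range (\<lambda>k. Todd (2 * k + 1)))" for n
    unfolding lspan_Tprod_eq_Pn[symmetric] by (rule lspan_subset_gen_alg) (use Tprod_in_gen_alg in blast)
  then show "calP \<subseteq> gen_alg (range (\<lambda>k. Todd (2 * k + 1)))"
    unfolding calP_def by (intro lspan_subset_gen_alg) blast
  show "gen_alg (range (\<lambda>k. Todd (2 * k + 1))) \<subseteq> calP"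
  proof
    fix f
    assume "f \<in> gen_alg (range (\<lambda>k. Todd (2 * k + 1)))"
    then show "f \<in> calP"
    proof induction
      case gen_one
      then show ?case
        using peak_invariant_one Pn_subset_calP by (auto simp: Pn_eq_peak_invariant)
    next
      case (gen_base g)
      then obtain k where "g = Todd (2 * k + 1)"
        by blast
      then have "g \<in> Pn (2 * k + 1)"
        using peak_invariant_Todd[of "2 * k + 1"] by (simp add: Pn_eq_peak_invariant)
      then show ?case
        using Pn_subset_calP by blast
    next
      case (gen_add f g)
      from gen_add.IH show ?case
        unfolding calP_def by (rule lspan_add)
    next
      case (gen_smul f c)
      from gen_smul.IH show ?case
        unfolding calP_def by (rule lspan_smul)
    next
      case (gen_mul f g)
      from gen_mul.IH show ?case
        by (rule calP_mul_closed)
    qed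
  qed
qed

theorem mainTheorem4:
  shows "(\<forall>n\<ge>1. Stilde n = smul 2 (H n))
    \<and> calP = gen_alg (range (\<lambda>k. Todd (2 * k + 1)))
    \<and> (\<forall>n. (\<forall>c. (\<Sum>I\<in>oddcomps n. smul (c I) (Tprod I)) = 0
                  \<longrightarrow> (\<forall>I\<in>oddcomps n. c I = 0))
          \<and> lspan (Tprod ` oddcomps n) = Pn n)"
  using Stilde_eq_two_H calP_eq_gen_alg Tprod_linear_independent lspan_Tprod_eq_Pn by blast

end
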